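(* For all complex $q$ with $|q|<1$, $$F^{\rm ed}_{\rm od}(q)=\frac{q\,(-q^2;q^2)_\infty}{1-q}\left(2-\frac{(-q;q^2)_\infty}{(-q^2;q^2)_\infty}\right).$$
   Context: For $n\in\mathbb N_0\cup\{\infty\}$, $(a;q)_n:=\prod_{j=0}^{n-1}(1-aq^j)$. Define $$F^{\rm ed}_{\rm od}(q):=\sum_{n=0}^\infty q^{2n+1}(-q;q^2)_n(-q^{2n+2};q^2)_\infty,$$ the generating function for partitions into at least one odd part, with odd parts distinct, and even parts distinct and all larger than every odd part. *)

theory Defs
  imports "HOL-Analysis.Analysis"
begin

definition qpoch :: "complex \<Rightarrow> complex \<Rightarrow> nat \<Rightarrow> complex" where
  "qpoch a q n = (\<Prod>j<n. 1 - a * q ^ j)"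

definition qpoch_inf :: "complex \<Rightarrow> complex \<Rightarrow> complex" where
  "qpoch_inf a q = (\<Prod>j. 1 - a * q ^ j)"

definition F_ed_od :: "complex \<Rightarrow> complex" where
  "F_ed_od q = (\<Sum>n. q ^ (2*n+1) * qpoch (-q) (q^2) n * qpoch_inf (-(q ^ (2*n+2))) (q^2))"

end

theory Submission
  imports Defs
begin

text \<open>Write P_n = (-q;q^2)_n and Q_n = (-q^2;q^2)_n. Since
  (-q^(2n+2);q^2)_\<infinity> = (-q^2;q^2)_\<infinity> / Q_n, the n-th term of the series is
  (-q^2;q^2)_\<infinity> q^(2n+1) P_n / Q_n. For d_n = (1 + q^(2n)) P_n / Q_n (\<open>ed_od_ratio q n\<close>) one has
  d_(n+1) = (1 + q^(2n+1)) P_n / Q_n, hence q^(2n+1) P_n / Q_n = q (d_n - d_(n+1)) / (1 - q),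
  and the series telescopes: d_0 = 2 and d_n tends to (-q;q^2)_\<infinity> / (-q^2;q^2)_\<infinity>.\<close>

lemma qpoch_Suc: "qpoch a t (Suc n) = qpoch a t n * (1 - a * t ^ n)"
  by (simp add: qpoch_def)

lemma convergent_prod_qpoch:
  fixes a t :: complex
  assumes "norm t < 1"
  shows "convergent_prod (\<lambda>j. 1 - a * t ^ j)"
proof -
  have "summable (\<lambda>j. norm a * norm t ^ j)"
    using assms by (intro summable_mult summable_geometric) auto
  then have "summable (\<lambda>j. norm ((1 - a * t ^ j) - 1))"
    by (simp add: norm_mult norm_power)
  then show ?thesis
    by (intro abs_convergent_prod_imp_convergent_prod summable_imp_abs_convergent_prod)
qed

lemma qpoch_tendsto_qpoch_inf:
  fixes a t :: complex
  assumes "norm t < 1"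
  shows "(\<lambda>n. qpoch a t n) \<longlonglongrightarrow> qpoch_inf a t"
proof -
  have "(\<lambda>n. \<Prod>j\<le>n. 1 - a * t ^ j) \<longlonglongrightarrow> qpoch_inf a t"
    unfolding qpoch_inf_def by (rule convergent_prod_LIMSEQ[OF convergent_prod_qpoch[OF assms]])
  then have "(\<lambda>n. qpoch a t (Suc n)) \<longlonglongrightarrow> qpoch_inf a t"
    by (simp add: qpoch_def lessThan_Suc_atMost)
  then show ?thesis
    by (rule LIMSEQ_imp_Suc)
qed

lemma qpoch_factor_nonzero:
  fixes a t :: complex
  assumes "norm a < 1" "norm t \<le> 1"
  shows "1 - a * t ^ j \<noteq> 0"
proof -
  have "norm (a * t ^ j) \<le> norm a"
    using assms by (simp add: norm_mult norm_power mult_left_le power_le_one)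
  then have "a * t ^ j \<noteq> 1"
    using assms(1) by auto
  then show ?thesis
    by simp
qed

lemma qpoch_nonzero:
  fixes a t :: complex
  assumes "norm a < 1" "norm t \<le> 1"
  shows "qpoch a t n \<noteq> 0"
  using qpoch_factor_nonzero[OF assms] by (simp add: qpoch_def)

lemma qpoch_inf_nonzero:
  fixes a t :: complex
  assumes "norm a < 1" "norm t < 1"
  shows "qpoch_inf a t \<noteq> 0"
  unfolding qpoch_inf_def
  using assms by (intro prodinf_nonzero convergent_prod_qpoch qpoch_factor_nonzero) auto

lemma qpoch_inf_shift:
  fixes a t :: complex
  assumes "norm t < 1" "\<And>j. j < n \<Longrightarrow> 1 - a * t ^ j \<noteq> 0"
  shows "qpoch_inf (a * t ^ n) t = qpoch_inf a t / qpoch a t n"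
proof -
  have "(\<Prod>j. 1 - a * t ^ (j + n)) = qpoch_inf a t / qpoch a t n"
    unfolding qpoch_inf_def qpoch_def
    using prodinf_divide_initial_segment[OF convergent_prod_qpoch[OF assms(1)]] assms(2)
    by blast
  then show ?thesis
    by (simp add: qpoch_inf_def power_add mult_ac)
qed

definition ed_od_ratio :: "complex \<Rightarrow> nat \<Rightarrow> complex" where
  "ed_od_ratio q n = (1 + q ^ (2*n)) * qpoch (-q) (q^2) n / qpoch (-(q^2)) (q^2) n"

lemma ed_od_ratio_0 [simp]: "ed_od_ratio q 0 = 2"
  by (simp add: ed_od_ratio_def qpoch_def)

lemma ed_od_ratio_tendsto:
  fixes q :: complex
  assumes "norm q < 1"
  shows "ed_od_ratio q \<longlonglongrightarrow> qpoch_inf (-q) (q^2) / qpoch_inf (-(q^2)) (q^2)"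
proof -
  have q2: "norm (q^2) < 1"
    using assms by (simp add: norm_power power_less_one_iff)
  have "ed_od_ratio q \<longlonglongrightarrow> (1 + 0) * qpoch_inf (-q) (q^2) / qpoch_inf (-(q^2)) (q^2)"
    unfolding ed_od_ratio_def power_mult using q2
    by (intro tendsto_intros qpoch_tendsto_qpoch_inf LIMSEQ_power_zero qpoch_inf_nonzero) auto
  then show ?thesis
    by simp
qed

lemma ed_od_ratio_diff:
  fixes q :: complex
  assumes "norm q < 1"
  shows "q ^ (2*n+1) * qpoch (-q) (q^2) n / qpoch (-(q^2)) (q^2) n
    = q * (ed_od_ratio q n - ed_od_ratio q (Suc n)) / (1 - q)"
proof -
  define x where "x = (q^2)^n"
  define P where "P = qpoch (-q) (q^2) n"
  define Q where "Q = qpoch (-(q^2)) (q^2) n"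
  have q2: "norm (q^2) < 1"
    using assms by (simp add: norm_power power_less_one_iff)
  have "Q \<noteq> 0"
    unfolding Q_def using q2 by (intro qpoch_nonzero) auto
  moreover have "1 + q^2 * x \<noteq> 0"
    using qpoch_factor_nonzero[of "-(q^2)" "q^2" n] q2 by (simp add: x_def)
  moreover have "ed_od_ratio q (Suc n) = (1 + q^2 * x) * (P * (1 + q * x)) / (Q * (1 + q^2 * x))"
  proof -
    have "q ^ (2 * Suc n) = q^2 * x"
      unfolding power_mult x_def by simp
    then show ?thesis
      unfolding ed_od_ratio_def qpoch_Suc P_def[symmetric] Q_def[symmetric] x_def[symmetric]
      by simp
  qed
  ultimately have ratio_Suc: "ed_od_ratio q (Suc n) = (1 + q * x) * P / Q"
    by simp
  have ratio: "ed_od_ratio q n = (1 + x) * P / Q"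
    by (simp add: ed_od_ratio_def power_mult x_def P_def Q_def)
  have "q \<noteq> 1"
    using assms by auto
  then have "q * x * P / Q = q * (ed_od_ratio q n - ed_od_ratio q (Suc n)) / (1 - q)"
    unfolding ratio ratio_Suc using \<open>Q \<noteq> 0\<close> by (simp add: field_simps)
  moreover have "q ^ (2*n+1) = q * x"
    by (simp add: power_mult x_def)
  ultimately show ?thesis
    unfolding P_def Q_def by (simp only:)
qed

lemma F_ed_od_term_telescopes:
  fixes q :: complex
  assumes "norm q < 1"
  shows "q ^ (2*n+1) * qpoch (-q) (q^2) n * qpoch_inf (-(q ^ (2*n+2))) (q^2)
    = q * qpoch_inf (-(q^2)) (q^2) / (1 - q) * (ed_od_ratio q n - ed_od_ratio q (Suc n))"
proof -
  have q2: "norm (q^2) < 1"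
    using assms by (simp add: norm_power power_less_one_iff)
  have "q ^ (2*n+2) = q^2 * (q^2)^n"
    unfolding power_add power_mult by (rule mult.commute)
  then have "qpoch_inf (-(q ^ (2*n+2))) (q^2) = qpoch_inf (-(q^2)) (q^2) / qpoch (-(q^2)) (q^2) n"
    using qpoch_inf_shift[OF q2, of n "-(q^2)"] qpoch_factor_nonzero[of "-(q^2)" "q^2"] q2
    by simp
  then have "q ^ (2*n+1) * qpoch (-q) (q^2) n * qpoch_inf (-(q ^ (2*n+2))) (q^2)
      = qpoch_inf (-(q^2)) (q^2) * (q ^ (2*n+1) * qpoch (-q) (q^2) n / qpoch (-(q^2)) (q^2) n)"
    by simp
  also have "\<dots> = qpoch_inf (-(q^2)) (q^2) * (q * (ed_od_ratio q n - ed_od_ratio q (Suc n)) / (1 - q))"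
    by (simp only: ed_od_ratio_diff[OF assms])
  finally show ?thesis
    by simp
qed

theorem theorem1p1:
  fixes q :: complex
  assumes "norm q < 1"
  shows "F_ed_od q =
    q * qpoch_inf (-(q^2)) (q^2) / (1 - q) *
      (2 - qpoch_inf (-q) (q^2) / qpoch_inf (-(q^2)) (q^2))"
proof -
  have "(\<lambda>n. ed_od_ratio q n - ed_od_ratio q (Suc n))
      sums (2 - qpoch_inf (-q) (q^2) / qpoch_inf (-(q^2)) (q^2))"
    using telescope_sums'[OF ed_od_ratio_tendsto[OF assms]] by simp
  then have "(\<lambda>n. q * qpoch_inf (-(q^2)) (q^2) / (1 - q) * (ed_od_ratio q n - ed_od_ratio q (Suc n)))
      sums (q * qpoch_inf (-(q^2)) (q^2) / (1 - q) *
        (2 - qpoch_inf (-q) (q^2) / qpoch_inf (-(q^2)) (q^2)))"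
    by (rule sums_mult)
  then show ?thesis
    unfolding F_ed_od_def F_ed_od_term_telescopes[OF assms] by (rule sums_unique[symmetric])
qed

end
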